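(* Let $b\ge 2$ and $S\in\Sigma_b^\infty$. The following are equivalent: (a) $\limsup_{n\to\infty}\frac{\log d_{LZ(b)}(S\upharpoonright n)}{n}>0$; (b) there exist $\alpha<1$ and infinitely many full parses $w\sqsubseteq S$ with $D(w)\log_b|w|<\alpha(b-1)|w|$; (c) there exist $\alpha<1$ and infinitely many full parses $w\sqsubseteq S$ with $D(w)\log_b D(w)<\alpha(b-1)|w|$.
   Context: $\Sigma_b=\{0,\dots,b-1\}$; $\Sigma_b^\infty$ is the set of infinite sequences over $\Sigma_b$; $S\upharpoonright n$ is the length-$n$ prefix of $S$; $w\sqsubseteq S$ means $w$ is a prefix of $S$. Lempel–Ziv parsing in base $b$: let $T_0=\{\lambda\}\cup\Sigma_b$. Given $w$, parse left to right: having found phrases $x(1),\dots,x(i)$ and tree $T_i$, the next phrase $x(i+1)$ is the shortest nonempty prefix of the remaining input that is a leaf of $T_i$, and $T_{i+1}=T_i\cup\{x(i+1)a:a\in\Sigma_b\}$. If the input ends exactly at the end of a phrase (or $w=\lambda$), $w=x(1)\cdots x(j)$ is a full parse; otherwise $w=x(1)\cdots x(j)u$ with $u$ a nonempty interior vertex of $T_j$, the partial phrase. $D(w)=1+(b-1)j$ if $w$ is a full parse with $j$ phrases, and $D(w)=1+(b-1)(j+1)$ if $w$ has $j$ full phrases and a partial phrase $u$; then $L(u)$ is the number of leaves of $T_j$ extending $u$. With $\mathrm{fact}_b(1+(b-1)r)=\prod_{k=1}^r(1+(b-1)k)$, the base-$b$ Lempel–Ziv martingale is $d_{LZ(b)}(w)=b^{|w|}/\mathrm{fact}_b(D(w))$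 if $w$ is a full parse, and $b^{|w|}L(u)/\mathrm{fact}_b(D(w))$ otherwise. *)

theory Defs
  imports Complex_Main "HOL-Library.Extended_Real" "HOL-Library.Liminf_Limsup"
begin

type_synonym word = "nat list"

definition lz_leaf :: "word set \<Rightarrow> word \<Rightarrow> bool" where
  "lz_leaf T x \<longleftrightarrow> x \<in> T \<and> (\<forall>a. x @ [a] \<notin> T)"

definition lz_T0 :: "nat \<Rightarrow> word set" where
  "lz_T0 b = {[]} \<union> {[a] | a. a < b}"

definition lz_grow :: "nat \<Rightarrow> word set \<Rightarrow> word \<Rightarrow> word set" where
  "lz_grow b T x = T \<union> {x @ [a] | a. a < b}"

text \<open>Parsing with fuel (the fuel is the input length, which suffices since each
phrase is nonempty). Returns (full phrases, partial phrase (or []), final tree).\<close>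
primrec lz_aux :: "nat \<Rightarrow> nat \<Rightarrow> word set \<Rightarrow> word \<Rightarrow> word list \<times> word \<times> word set" where
  "lz_aux b 0 T w = ([], w, T)"
| "lz_aux b (Suc f) T w =
     (if w = [] then ([], [], T)
      else if \<exists>k. 1 \<le> k \<and> k \<le> length w \<and> lz_leaf T (take k w) then
        (let k = (LEAST k. 1 \<le> k \<and> k \<le> length w \<and> lz_leaf T (take k w));
             x = take k w;
             r = lz_aux b f (lz_grow b T x) (drop k w)
         in (x # fst r, snd r))
      else ([], w, T))"

definition lz_parse :: "nat \<Rightarrow> word \<Rightarrow> word list \<times> word \<times> word set" where
  "lz_parse b w = lz_aux b (length w) (lz_T0 b) w"

definition lz_phrases :: "nat \<Rightarrow> word \<Rightarrow> word list" where
  "lz_phrases b w = fst (lz_parse b w)"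

definition lz_partial :: "nat \<Rightarrow> word \<Rightarrow> word" where
  "lz_partial b w = fst (snd (lz_parse b w))"

definition lz_tree :: "nat \<Rightarrow> word \<Rightarrow> word set" where
  "lz_tree b w = snd (snd (lz_parse b w))"

definition lz_full_parse :: "nat \<Rightarrow> word \<Rightarrow> bool" where
  "lz_full_parse b w \<longleftrightarrow> lz_partial b w = []"

definition lz_r :: "nat \<Rightarrow> word \<Rightarrow> nat" where
  "lz_r b w = (if lz_full_parse b w then length (lz_phrases b w) else length (lz_phrases b w) + 1)"

definition lz_D :: "nat \<Rightarrow> word \<Rightarrow> nat" where
  "lz_D b w = 1 + (b - 1) * lz_r b w"

text \<open>fact_b(1 + (b-1) r) = prod_{k=1}^r (1 + (b-1) k)\<close>
definition fact_b :: "nat \<Rightarrow> nat \<Rightarrow> nat" where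
  "fact_b b r = (\<Prod>k=1..r. 1 + (b - 1) * k)"

definition lz_L :: "nat \<Rightarrow> word \<Rightarrow> nat" where
  "lz_L b w = card {y \<in> lz_tree b w. lz_leaf (lz_tree b w) y \<and> (\<exists>v. y = lz_partial b w @ v)}"

definition d_LZ :: "nat \<Rightarrow> word \<Rightarrow> real" where
  "d_LZ b w = (if lz_full_parse b w then real b ^ length w / real (fact_b b (lz_r b w))
               else real b ^ length w * real (lz_L b w) / real (fact_b b (lz_r b w)))"

definition prefix_of :: "(nat \<Rightarrow> nat) \<Rightarrow> nat \<Rightarrow> word" where
  "prefix_of S n = map S [0..<n]"

end

theory Submission
  imports Defs
begin

(*
  For a full parse w with j phrases, ln d_LZ(w) = |w| ln b - ln fact_b(j), and (b - 1) ln fact_b(j)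
  agrees with D ln D, where D = 1 + (b - 1) j, up to O(j).  Hence along full parses a linear growth
  rate of ln d_LZ is the same as D log_b D < alpha (b - 1) |w| for some alpha < 1.  Either condition
  forces j = o(|w|), because j ln j - j <= ln fact_b(j) <= |w| ln b, and then the estimate
  D ln(|w| / D) <= 2 sqrt(D |w|) makes log_b D and log_b |w| interchangeable.  Arbitrary prefixes
  reduce to full ones: cutting off the partial phrase shortens the prefix by at most j + 1 symbols
  and changes d_LZ by a factor at most (b + 1)^(2(j + 1)).
*)

section \<open>Real inequalities and frequent events\<close>

lemma eventually_le_if_mult_ln_le:
  fixes A B \<eta> :: real
  assumes "A \<ge> 0" "\<eta> > 0"
  shows "\<forall>\<^sub>F m in sequentially. \<forall>x\<ge>1. x * ln x \<le> A * m + B * x \<longrightarrow> x \<le> \<eta> * m"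
proof -
  obtain M :: nat where M: "exp (A / \<eta> + B) / \<eta> \<le> M"
    using real_arch_simple by blast
  have "\<forall>\<^sub>F m in sequentially. exp (A / \<eta> + B) \<le> \<eta> * m"
    using eventually_ge_at_top[of M]
  proof eventually_elim
    case (elim m)
    then have "exp (A / \<eta> + B) / \<eta> \<le> m"
      using M by linarith
    then show ?case
      using assms(2) by (simp add: pos_divide_le_eq mult.commute)
  qed
  then show ?thesis
  proof (rule eventually_mono, intro allI impI)
    fix m :: nat and x :: real
    assume m: "exp (A / \<eta> + B) \<le> \<eta> * m" and "x \<ge> 1" and x: "x * ln x \<le> A * m + B * x"
    show "x \<le> \<eta> * m"
    proof (rule ccontr)
      assume "\<not> x \<le> \<eta> * m"
      then have "A * m \<le> A / \<eta> * x"
        using assms by (simp add: field_simps mult_left_mono)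
      with x have "x * ln x \<le> x * (A / \<eta> + B)"
        by (simp add: algebra_simps)
      then have "ln x \<le> A / \<eta> + B"
        using \<open>x \<ge> 1\<close> by simp
      then have "x \<le> exp (A / \<eta> + B)"
        using \<open>x \<ge> 1\<close> by (metis exp_ln exp_le_cancel_iff less_le_trans zero_less_one)
      with m \<open>\<not> x \<le> \<eta> * m\<close> show False by simp
    qed
  qed
qed

lemma mult_ln_le_mult_ln_self_add_sqrt:
  fixes x y :: real
  assumes "x > 0" "y > 0"
  shows "x * ln y \<le> x * ln x + 2 * sqrt (x * y)"
proof -
  have "ln (y / x) = 2 * ln (sqrt (y / x))"
    using assms by (simp add: ln_sqrt)
  also have "\<dots> \<le> 2 * sqrt (y / x)"
    using ln_le_minus_one[of "sqrt (y / x)"] assms by simp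
  finally have "x * ln (y / x) \<le> x * (2 * sqrt (y / x))"
    using assms by (intro mult_left_mono) simp_all
  also have "x * (2 * sqrt (y / x)) = 2 * sqrt (x * y)"
    using assms by (simp add: real_sqrt_divide real_sqrt_mult field_simps)
  finally show ?thesis
    using assms by (simp add: ln_div algebra_simps)
qed

lemma eventually_mult_log_self_lt_if_mult_log_lt:
  fixes a \<beta> :: real
  assumes "a > 1"
  shows "\<forall>\<^sub>F n in sequentially. \<forall>x\<ge>1. x * log a n < \<beta> * n \<longrightarrow> x * log a x < \<beta> * n"
proof -
  obtain M :: nat where M: "a powr max \<beta> 0 \<le> M"
    using real_arch_simple by blast
  show ?thesis
    using eventually_ge_at_top[of "max M 1"]
  proof (rule eventually_mono, intro allI impI)
    fix n :: nat and x :: real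
    assume n: "max M 1 \<le> n" and "x \<ge> 1" and x: "x * log a n < \<beta> * n"
    have "max \<beta> 0 \<le> log a n"
      using M n assms by (subst le_log_iff) auto
    have "x \<le> n"
    proof (rule ccontr)
      assume "\<not> x \<le> n"
      then have "n * log a n \<le> x * log a n"
        using \<open>max \<beta> 0 \<le> log a n\<close> by (intro mult_right_mono) auto
      moreover have "\<beta> * n \<le> n * log a n"
        using \<open>max \<beta> 0 \<le> log a n\<close> by (metis max.bounded_iff mult.commute mult_right_mono of_nat_0_le_iff)
      ultimately show False using x by linarith
    qed
    then have "x * log a x \<le> x * log a n"
      using \<open>x \<ge> 1\<close> assms by (intro mult_left_mono log_mono) auto
    with x show "x * log a x < \<beta> * n" by linarith
  qed
qed

lemma eventually_mult_log_lt_if_mult_log_self_lt: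
  fixes a \<beta> \<beta>' :: real
  assumes "a > 1" "\<beta> < \<beta>'"
  shows "\<forall>\<^sub>F n in sequentially. \<forall>x\<ge>1. x * log a x < \<beta> * n \<longrightarrow> x * log a n < \<beta>' * n"
proof -
  define \<delta> where "\<delta> = (\<beta>' - \<beta>) * ln a"
  have "\<delta> > 0"
    using assms unfolding \<delta>_def by simp
  (* x \<le> (\<delta> / 2)\<^sup>2 n keeps the error term 2 sqrt (x n) below \<delta> n *)
  have "\<forall>\<^sub>F n in sequentially. \<forall>x\<ge>1. x * ln x \<le> (max \<beta> 0 * ln a) * n + 0 * x \<longrightarrow> x \<le> (\<delta> / 2)\<^sup>2 * n"
    using assms \<open>\<delta> > 0\<close> by (intro eventually_le_if_mult_ln_le) auto
  then show ?thesis
    using eventually_ge_at_top[of 1]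
  proof (eventually_elim, intro allI impI)
    fix n :: nat and x :: real
    assume small: "\<forall>x\<ge>1. x * ln x \<le> (max \<beta> 0 * ln a) * n + 0 * x \<longrightarrow> x \<le> (\<delta> / 2)\<^sup>2 * n"
      and "1 \<le> n" and "x \<ge> 1" and x: "x * log a x < \<beta> * n"
    have "x * ln x < \<beta> * n * ln a"
      using x assms(1) by (simp add: log_def pos_divide_less_eq mult.assoc)
    also have "\<dots> \<le> (max \<beta> 0 * ln a) * n + 0 * x"
      using mult_right_mono[of \<beta> "max \<beta> 0" "n * ln a"] assms(1) by (simp add: algebra_simps)
    finally have "x \<le> (\<delta> / 2)\<^sup>2 * n"
      using small \<open>x \<ge> 1\<close> by auto
    have "x * ln n \<le> x * ln x + 2 * sqrt (x * n)"
      using \<open>x \<ge> 1\<close> \<open>1 \<le> n\<close> by (intro mult_ln_le_mult_ln_self_add_sqrt) auto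
    also have "sqrt (x * n) \<le> sqrt (((\<delta> / 2) * n)\<^sup>2)"
      using mult_right_mono[OF \<open>x \<le> (\<delta> / 2)\<^sup>2 * n\<close>, of n]
      by (intro real_sqrt_le_mono) (simp add: power2_eq_square algebra_simps)
    also have "\<dots> = \<delta> / 2 * n"
      using \<open>\<delta> > 0\<close> by simp
    finally have "x * ln n < \<beta> * n * ln a + \<delta> * n"
      using \<open>x * ln x < \<beta> * n * ln a\<close> by simp
    also have "\<dots> = \<beta>' * n * ln a"
      unfolding \<delta>_def by (simp add: algebra_simps)
    finally show "x * log a n < \<beta>' * n"
      using assms(1) by (simp add: log_def pos_divide_less_eq mult.assoc)
  qed
qed

lemma frequently_mult_log_lt_iff_mult_log_self_lt:
  fixes a c :: real and D :: "nat \<Rightarrow> real"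
  assumes "a > 1" "c > 0" "\<And>n. D n \<ge> 1"
  shows "(\<exists>\<alpha><1. \<exists>\<^sub>F n in sequentially. P n \<and> D n * log a n < \<alpha> * c * n)
    \<longleftrightarrow> (\<exists>\<alpha><1. \<exists>\<^sub>F n in sequentially. P n \<and> D n * log a (D n) < \<alpha> * c * n)"
proof
  assume "\<exists>\<alpha><1. \<exists>\<^sub>F n in sequentially. P n \<and> D n * log a n < \<alpha> * c * n"
  then obtain \<alpha> where "\<alpha> < 1" and freq: "\<exists>\<^sub>F n in sequentially. P n \<and> D n * log a n < \<alpha> * c * n"
    by blast
  have "\<forall>\<^sub>F n in sequentially. P n \<and> D n * log a n < \<alpha> * c * n \<longrightarrow> P n \<and> D n * log a (D n) < \<alpha> * c * n"
    using eventually_mult_log_self_lt_if_mult_log_lt[OF assms(1), of "\<alpha> * c"]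
    by eventually_elim (use assms(3) in blast)
  then have "\<exists>\<^sub>F n in sequentially. P n \<and> D n * log a (D n) < \<alpha> * c * n"
    using freq by (rule frequently_mp)
  with \<open>\<alpha> < 1\<close> show "\<exists>\<alpha><1. \<exists>\<^sub>F n in sequentially. P n \<and> D n * log a (D n) < \<alpha> * c * n"
    by blast
next
  assume "\<exists>\<alpha><1. \<exists>\<^sub>F n in sequentially. P n \<and> D n * log a (D n) < \<alpha> * c * n"
  then obtain \<alpha> where "\<alpha> < 1" and freq: "\<exists>\<^sub>F n in sequentially. P n \<and> D n * log a (D n) < \<alpha> * c * n"
    by blast
  have "\<alpha> * c < (1 + \<alpha>) / 2 * c" and "(1 + \<alpha>) / 2 < 1"
    using \<open>\<alpha> < 1\<close> assms(2) by (simp_all add: field_simps)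
  have "\<forall>\<^sub>F n in sequentially. P n \<and> D n * log a (D n) < \<alpha> * c * n
      \<longrightarrow> P n \<and> D n * log a n < (1 + \<alpha>) / 2 * c * n"
    using eventually_mult_log_lt_if_mult_log_self_lt[OF assms(1) \<open>\<alpha> * c < (1 + \<alpha>) / 2 * c\<close>]
    by eventually_elim (use assms(3) in blast)
  then have "\<exists>\<^sub>F n in sequentially. P n \<and> D n * log a n < (1 + \<alpha>) / 2 * c * n"
    using freq by (rule frequently_mp)
  with \<open>(1 + \<alpha>) / 2 < 1\<close> show "\<exists>\<alpha><1. \<exists>\<^sub>F n in sequentially. P n \<and> D n * log a n < \<alpha> * c * n"
    by blast
qed

lemma limsup_gt_0_iff_frequently:
  fixes f :: "nat \<Rightarrow> real"
  shows "0 < limsup (\<lambda>n. ereal (f n)) \<longleftrightarrow> (\<exists>\<epsilon>>0. \<exists>\<^sub>F n in sequentially. \<epsilon> < f n)"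
proof
  assume "0 < limsup (\<lambda>n. ereal (f n))"
  then obtain \<epsilon> :: real where "0 < \<epsilon>" and \<epsilon>: "\<epsilon> < limsup (\<lambda>n. ereal (f n))"
    using ereal_dense2 by (metis zero_ereal_def ereal_less(2))
  have "\<exists>\<^sub>F n in sequentially. \<epsilon> < f n"
  proof (rule ccontr)
    assume "\<not> (\<exists>\<^sub>F n in sequentially. \<epsilon> < f n)"
    then have "\<forall>\<^sub>F n in sequentially. ereal (f n) \<le> ereal \<epsilon>"
      by (simp add: not_frequently not_less)
    then have "limsup (\<lambda>n. ereal (f n)) \<le> ereal \<epsilon>"
      by (rule Limsup_bounded)
    with \<epsilon> show False by simp
  qed
  with \<open>0 < \<epsilon>\<close> show "\<exists>\<epsilon>>0. \<exists>\<^sub>F n in sequentially. \<epsilon> < f n" by blast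
next
  assume "\<exists>\<epsilon>>0. \<exists>\<^sub>F n in sequentially. \<epsilon> < f n"
  then obtain \<epsilon> where "0 < \<epsilon>" and frequently: "\<exists>\<^sub>F n in sequentially. \<epsilon> < f n" by blast
  show "0 < limsup (\<lambda>n. ereal (f n))"
  proof (rule ccontr)
    assume "\<not> 0 < limsup (\<lambda>n. ereal (f n))"
    then have "limsup (\<lambda>n. ereal (f n)) < ereal \<epsilon>"
      using \<open>0 < \<epsilon>\<close> by (simp add: not_less) (metis ereal_less(2) le_less_trans)
    then have "\<forall>\<^sub>F n in sequentially. ereal (f n) < ereal \<epsilon>"
      by (rule Limsup_lessD)
    then have "\<forall>\<^sub>F n in sequentially. \<not> \<epsilon> < f n"
      by eventually_elim simp
    with frequently show False
      by (simp add: frequently_def)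
  qed
qed

lemma frequently_filterlim:
  assumes "\<exists>\<^sub>F x in F. P (g x)" "filterlim g G F"
  shows "\<exists>\<^sub>F y in G. P y"
  using assms eventually_compose_filterlim[of "\<lambda>y. \<not> P y" G g F]
  unfolding frequently_def by blast

lemma infinite_Collect_iff_frequently: "infinite {n::nat. P n} \<longleftrightarrow> (\<exists>\<^sub>F n in sequentially. P n)"
  by (metis cofinite_eq_sequentially frequently_cofinite)

section \<open>The Lempel--Ziv parse\<close>

(* The invariant of the parse trees: the root is internal and every internal node has all b
   children, so an input none of whose nonempty prefixes is a leaf stays inside the tree. *)
definition lz_complete :: "nat \<Rightarrow> word set \<Rightarrow> bool" where
  "lz_complete b T \<longleftrightarrow> [] \<in> T \<and> \<not> lz_leaf T [] \<and> (\<forall>x a c. x @ [a] \<in> T \<longrightarrow> c < b \<longrightarrow> x @ [c] \<in> T)"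

lemma lz_complete_T0: "b \<ge> 1 \<Longrightarrow> lz_complete b (lz_T0 b)"
  unfolding lz_complete_def lz_T0_def lz_leaf_def by (auto intro!: exI[of _ 0])

lemma lz_complete_grow:
  assumes "lz_complete b T" "lz_leaf T x"
  shows "lz_complete b (lz_grow b T x)"
  using assms unfolding lz_complete_def lz_grow_def lz_leaf_def by blast

lemma lz_complete_mem_if_no_leaf_prefix:
  assumes "lz_complete b T" "set w \<subseteq> {..<b}"
    and "\<forall>k. 1 \<le> k \<and> k \<le> length w \<longrightarrow> \<not> lz_leaf T (take k w)"
  shows "w \<in> T"
proof -
  have "take k w \<in> T" if "k \<le> length w" for k
    using that
  proof (induction k)
    case 0
    then show ?case using assms(1) by (simp add: lz_complete_def)
  next
    case (Suc k)
    have "\<not> lz_leaf T (take k w)"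
      using assms(1,3) Suc.prems by (cases k) (auto simp: lz_complete_def)
    then obtain a where "take k w @ [a] \<in> T"
      using Suc by (auto simp: lz_leaf_def)
    moreover have "w ! k \<in> set w" using Suc.prems by simp
    then have "w ! k < b" using assms(2) by auto
    ultimately show ?case
      using assms(1) Suc.prems by (auto simp: lz_complete_def take_Suc_conv_app_nth)
  qed
  then show ?thesis by (metis order_refl take_all)
qed

lemma finite_lz_grow: "finite T \<Longrightarrow> finite (lz_grow b T x)"
  unfolding lz_grow_def by auto

lemma card_lz_grow_le: "finite T \<Longrightarrow> card (lz_grow b T x) \<le> card T + b"
proof -
  assume "finite T"
  have "lz_grow b T x = T \<union> (\<lambda>a. x @ [a]) ` {..<b}"
    unfolding lz_grow_def by auto
  then show ?thesis
    using card_Un_le[of T] card_image_le[of "{..<b}" "\<lambda>a. x @ [a]"]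
    by (metis add_left_mono card_lessThan finite_lessThan order_trans)
qed

lemma card_lz_T0: "card (lz_T0 b) = b + 1"
proof -
  have "lz_T0 b = insert [] ((\<lambda>a. [a]) ` {..<b})"
    unfolding lz_T0_def by auto
  then show ?thesis by (auto simp: card_insert_if card_image inj_on_def)
qed

lemma lz_aux_Suc_stop:
  assumes "\<forall>k. 1 \<le> k \<and> k \<le> length w \<longrightarrow> \<not> lz_leaf T (take k w)"
  shows "lz_aux b (Suc f) T w = ([], w, T)"
  using assms by auto

lemma lz_aux_Suc_phrase:
  assumes "1 \<le> k" "k \<le> length w" "lz_leaf T (take k w)"
    and "\<forall>i. 1 \<le> i \<and> i < k \<longrightarrow> \<not> lz_leaf T (take i w)"
  shows "lz_aux b (Suc f) T w = apfst (Cons (take k w)) (lz_aux b f (lz_grow b T (take k w)) (drop k w))"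
proof -
  have "(LEAST k. 1 \<le> k \<and> k \<le> length w \<and> lz_leaf T (take k w)) = k"
    using assms by (intro Least_equality) (auto simp: not_less[symmetric])
  then show ?thesis
    using assms by (cases "lz_aux b f (lz_grow b T (take k w)) (drop k w)") (auto simp: Let_def)
qed

lemma lz_aux_Suc_cases:
  obtains (stop) "\<forall>k. 1 \<le> k \<and> k \<le> length w \<longrightarrow> \<not> lz_leaf T (take k w)"
      "lz_aux b (Suc f) T w = ([], w, T)"
  | (phrase) k where "1 \<le> k" "k \<le> length w" "lz_leaf T (take k w)"
      "\<forall>i. 1 \<le> i \<and> i < k \<longrightarrow> \<not> lz_leaf T (take i w)"
      "lz_aux b (Suc f) T w = apfst (Cons (take k w)) (lz_aux b f (lz_grow b T (take k w)) (drop k w))"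
proof (cases "\<exists>k. 1 \<le> k \<and> k \<le> length w \<and> lz_leaf T (take k w)")
  case True
  define k where "k = (LEAST k. 1 \<le> k \<and> k \<le> length w \<and> lz_leaf T (take k w))"
  have k: "1 \<le> k \<and> k \<le> length w \<and> lz_leaf T (take k w)"
    unfolding k_def using LeastI_ex[OF True] .
  moreover have "\<forall>i. 1 \<le> i \<and> i < k \<longrightarrow> \<not> lz_leaf T (take i w)"
    using k not_less_Least[of _ "\<lambda>k. 1 \<le> k \<and> k \<le> length w \<and> lz_leaf T (take k w)"]
    unfolding k_def by fastforce
  ultimately show ?thesis using phrase lz_aux_Suc_phrase by blast
qed (use stop lz_aux_Suc_stop in blast)

declare lz_aux.simps(2) [simp del]

lemma lz_aux_Nil [simp]: "lz_aux b f T [] = ([], [], T)"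
  by (cases f) (simp_all add: lz_aux_Suc_stop)

lemma lz_aux_decomp: "w = concat (fst (lz_aux b f T w)) @ fst (snd (lz_aux b f T w))"
proof (induction f arbitrary: T w)
  case (Suc f)
  show ?case
  proof (cases rule: lz_aux_Suc_cases[of w T b f])
    case (phrase k)
    let ?r = "lz_aux b f (lz_grow b T (take k w)) (drop k w)"
    have "w = take k w @ concat (fst ?r) @ fst (snd ?r)"
      using Suc.IH[of "drop k w" "lz_grow b T (take k w)"] by (metis append_take_drop_id)
    then show ?thesis using phrase(5) by simp
  qed simp
qed simp

lemma lz_aux_phrases_nonempty: "[] \<notin> set (fst (lz_aux b f T w))"
proof (induction f arbitrary: T w)
  case (Suc f)
  then show ?case
    by (cases rule: lz_aux_Suc_cases[of w T b f]) (auto simp: lz_leaf_def)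
qed simp

lemma lz_aux_tree_card:
  assumes "finite T"
  shows "finite (snd (snd (lz_aux b f T w)))
    \<and> card (snd (snd (lz_aux b f T w))) \<le> card T + b * length (fst (lz_aux b f T w))"
  using assms
proof (induction f arbitrary: T w)
  case (Suc f)
  show ?case
  proof (cases rule: lz_aux_Suc_cases[of w T b f])
    case (phrase k)
    then show ?thesis
      using Suc.IH[of "lz_grow b T (take k w)" "drop k w"] Suc.prems
        card_lz_grow_le[of T b "take k w"] finite_lz_grow[of T b "take k w"] by auto
  qed (use Suc.prems in simp)
qed simp

lemma lz_aux_tree_depth:
  assumes "\<forall>y\<in>T. length y \<le> d"
  shows "\<forall>y\<in>snd (snd (lz_aux b f T w)). length y \<le> d + length (fst (lz_aux b f T w))"
  using assms
proof (induction f arbitrary: T w d)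
  case (Suc f)
  show ?case
  proof (cases rule: lz_aux_Suc_cases[of w T b f])
    case (phrase k)
    have "\<forall>y\<in>lz_grow b T (take k w). length y \<le> Suc d"
      using Suc.prems phrase(3) by (auto simp: lz_grow_def lz_leaf_def)
    then show ?thesis
      using Suc.IH[of "lz_grow b T (take k w)" "Suc d" "drop k w"] phrase(5) by auto
  qed (use Suc.prems in simp)
qed simp

lemma lz_aux_partial_mem_tree:
  assumes "lz_complete b T" "set w \<subseteq> {..<b}" "length w \<le> f"
  shows "fst (snd (lz_aux b f T w)) \<in> snd (snd (lz_aux b f T w))"
  using assms
proof (induction f arbitrary: T w)
  case 0
  then show ?case by (simp add: lz_complete_def)
next
  case (Suc f)
  show ?case
  proof (cases rule: lz_aux_Suc_cases[of w T b f])
    case stop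
    then show ?thesis using Suc.prems lz_complete_mem_if_no_leaf_prefix by simp
  next
    case (phrase k)
    have "lz_complete b (lz_grow b T (take k w))"
      using lz_complete_grow[OF Suc.prems(1) phrase(3)] .
    moreover have "set (drop k w) \<subseteq> {..<b}"
      using Suc.prems(2) by (auto dest: in_set_dropD)
    ultimately show ?thesis
      using Suc.IH[of "lz_grow b T (take k w)" "drop k w"] Suc.prems(3) phrase(1,5) by simp
  qed
qed

lemma lz_aux_concat_phrases:
  assumes "length (concat (fst (lz_aux b f T w))) \<le> f'"
  shows "fst (lz_aux b f' T (concat (fst (lz_aux b f T w)))) = fst (lz_aux b f T w)
    \<and> fst (snd (lz_aux b f' T (concat (fst (lz_aux b f T w))))) = []"
  using assms
proof (induction f arbitrary: T w f')
  case (Suc f)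
  show ?case
  proof (cases rule: lz_aux_Suc_cases[of w T b f])
    case (phrase k)
    define r where "r = lz_aux b f (lz_grow b T (take k w)) (drop k w)"
    define v where "v = take k w @ concat (fst r)"
    obtain f'' where f': "f' = Suc f''"
      using Suc.prems phrase(1,2) by (cases f') (auto simp: phrase(5) r_def)
    have take_v: "take i v = take i w" if "i \<le> k" for i
      using that phrase(2) by (simp add: v_def)
    have "lz_aux b f' T v
        = apfst (Cons (take k w)) (lz_aux b f'' (lz_grow b T (take k w)) (concat (fst r)))"
      unfolding f' using phrase(1-4) take_v lz_aux_Suc_phrase[of k v T b f'']
      by (simp add: v_def min_def)
    moreover have "fst (lz_aux b f'' (lz_grow b T (take k w)) (concat (fst r))) = fst r
        \<and> fst (snd (lz_aux b f'' (lz_grow b T (take k w)) (concat (fst r)))) = []"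
      using Suc.IH[of "lz_grow b T (take k w)" "drop k w" f''] Suc.prems phrase
      by (simp add: r_def f')
    ultimately show ?thesis
      using phrase(5) by (simp add: r_def v_def)
  qed simp
qed simp

lemma length_le_length_concat: "[] \<notin> set xss \<Longrightarrow> length xss \<le> length (concat xss)"
proof (induction xss)
  case (Cons xs xss)
  then have "length xs \<ge> 1" by (cases xs) auto
  with Cons show ?case by simp
qed simp

lemma lz_parse_decomp: "w = concat (lz_phrases b w) @ lz_partial b w"
  unfolding lz_phrases_def lz_partial_def lz_parse_def by (rule lz_aux_decomp)

lemma length_lz_phrases_le: "length (lz_phrases b w) \<le> length (concat (lz_phrases b w))"
  unfolding lz_phrases_def lz_parse_def
  by (intro length_le_length_concat lz_aux_phrases_nonempty)

lemma card_lz_tree_le: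
  "finite (lz_tree b w) \<and> card (lz_tree b w) \<le> b + 1 + b * length (lz_phrases b w)"
proof -
  have "finite (lz_T0 b)"
    using card_lz_T0[of b] by (simp add: card_ge_0_finite)
  then show ?thesis
    unfolding lz_tree_def lz_phrases_def lz_parse_def
    using lz_aux_tree_card[of "lz_T0 b" b "length w" w] card_lz_T0[of b] by simp
qed

lemma length_lz_partial_le:
  assumes "b \<ge> 1" "set w \<subseteq> {..<b}"
  shows "length (lz_partial b w) \<le> length (lz_phrases b w) + 1"
proof -
  have "\<forall>y\<in>lz_T0 b. length y \<le> 1"
    unfolding lz_T0_def by auto
  then have "\<forall>y\<in>lz_tree b w. length y \<le> 1 + length (lz_phrases b w)"
    unfolding lz_tree_def lz_phrases_def lz_parse_def by (rule lz_aux_tree_depth)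
  moreover have "lz_partial b w \<in> lz_tree b w"
    unfolding lz_tree_def lz_partial_def lz_parse_def
    using assms by (intro lz_aux_partial_mem_tree lz_complete_T0) auto
  ultimately show ?thesis by fastforce
qed

lemma lz_parse_concat_phrases:
  "lz_full_parse b (concat (lz_phrases b w)) \<and> lz_phrases b (concat (lz_phrases b w)) = lz_phrases b w"
  using lz_aux_concat_phrases[of b "length w" "lz_T0 b" w, OF order_refl]
  unfolding lz_full_parse_def lz_partial_def lz_phrases_def lz_parse_def by simp

lemma length_prefix_of [simp]: "length (prefix_of S n) = n"
  unfolding prefix_of_def by simp

lemma set_prefix_of_subset: "\<forall>i. S i < b \<Longrightarrow> set (prefix_of S n) \<subseteq> {..<b}"
  unfolding prefix_of_def by auto

lemma concat_lz_phrases_prefix_of: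
  "concat (lz_phrases b (prefix_of S n)) = prefix_of S (length (concat (lz_phrases b (prefix_of S n))))"
proof -
  let ?u = "concat (lz_phrases b (prefix_of S n))"
  have "prefix_of S n = ?u @ lz_partial b (prefix_of S n)"
    by (rule lz_parse_decomp)
  then have "length ?u \<le> n"
    by (metis le_add1 length_append length_prefix_of)
  have "?u = take (length ?u) (prefix_of S n)"
    using \<open>prefix_of S n = ?u @ _\<close> by (metis append_eq_conv_conj)
  also have "take (length ?u) (prefix_of S n) = prefix_of S (length ?u)"
    using \<open>length ?u \<le> n\<close> unfolding prefix_of_def by (simp add: take_map)
  finally show ?thesis .
qed

section \<open>Estimates for \<open>fact_b\<close>\<close>

lemma power_div_fact_le_exp:
  fixes x :: real
  assumes "x \<ge> 0"
  shows "x ^ n / fact n \<le> exp x"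
proof -
  have "(\<lambda>n. x ^ n / fact n) sums exp x"
    using exp_converges[of x] by (simp add: divide_inverse mult.commute)
  then have "(\<Sum>i\<in>{n}. x ^ i / fact i) \<le> (\<Sum>i. x ^ i / fact i)"
    using assms by (intro sum_le_suminf) (auto simp: sums_iff)
  then show ?thesis
    using \<open>_ sums exp x\<close> by (simp add: sums_iff)
qed

lemma fact_b_Suc: "fact_b b (Suc j) = fact_b b j * (1 + (b - 1) * Suc j)"
  unfolding fact_b_def by (simp add: prod.cl_ivl_Suc)

lemma fact_b_pos: "fact_b b j > 0"
  unfolding fact_b_def by (simp add: prod_pos)

lemma fact_b_le_power: "fact_b b j \<le> (1 + (b - 1) * j) ^ j"
  unfolding fact_b_def by (rule prod_le_power) auto

lemma fact_le_fact_b: "b \<ge> 2 \<Longrightarrow> fact j \<le> fact_b b j"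
proof -
  assume "b \<ge> 2"
  then have "(\<Prod>k = 1..j. k) \<le> fact_b b j"
    unfolding fact_b_def by (intro prod_mono) (auto intro: le_SucI mult_le_mono1[of 1 "b - 1", simplified])
  then show ?thesis by (simp add: fact_prod)
qed

lemma ln_fact_b_le: "ln (fact_b b j) \<le> j * ln (1 + real (b - 1) * j)"
proof -
  have "ln (fact_b b j) \<le> ln (real ((1 + (b - 1) * j) ^ j))"
    using fact_b_le_power[of b j] fact_b_pos[of b j] by (simp only: ln_le_cancel_iff of_nat_le_iff of_nat_0_less_iff zero_less_power)
  then show ?thesis by (simp add: ln_realpow)
qed

lemma ln_fact_b_ge:
  assumes "b \<ge> 2"
  shows "j * ln j - j \<le> ln (fact_b b j)"
proof (cases "j = 0")
  case False
  have "real j ^ j \<le> exp j * fact j"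
    using power_div_fact_le_exp[of "real j" j] by (simp add: pos_divide_le_eq)
  also have "\<dots> \<le> exp j * fact_b b j"
    using fact_le_fact_b[OF assms, of j] by (intro mult_left_mono) (metis of_nat_fact of_nat_le_iff, simp)
  finally have "ln (real j ^ j) \<le> ln (exp j * fact_b b j)"
    using False fact_b_pos[of b j] by (subst ln_le_cancel_iff) auto
  then show ?thesis
    using fact_b_pos[of b j] by (simp add: ln_realpow ln_mult)
qed (simp add: fact_b_def)

lemma mult_ln_fact_b_le:
  "real (b - 1) * ln (fact_b b j) \<le> (1 + real (b - 1) * j) * ln (1 + real (b - 1) * j)"
proof -
  have "real (b - 1) * ln (fact_b b j) \<le> real (b - 1) * (j * ln (1 + real (b - 1) * j))"
    using ln_fact_b_le by (intro mult_left_mono) auto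
  also have "\<dots> \<le> (1 + real (b - 1) * j) * ln (1 + real (b - 1) * j)"
    unfolding mult.assoc[symmetric] by (intro mult_right_mono) auto
  finally show ?thesis .
qed

lemma mult_ln_le_ln_fact_b:
  assumes "b \<ge> 2"
  shows "(1 + real (b - 1) * j) * ln (1 + real (b - 1) * j)
    \<le> real (b - 1) * ln (fact_b b j) + b * (ln b + 1) * j"
proof (cases "j = 0")
  case False
  define D where "D = 1 + real (b - 1) * j"
  have "D \<le> b * j"
    using False assms unfolding D_def by (simp add: of_nat_diff algebra_simps)
  then have "ln D \<le> ln (b * j)"
    using False assms by (subst ln_le_cancel_iff) (auto simp: D_def add_pos_nonneg)
  also have "\<dots> = ln b + ln j"
    using False assms by (simp add: ln_mult)
  finally have "D * ln D \<le> D * ln b + D * ln j"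
    by (simp add: D_def add_pos_nonneg mult_left_mono flip: distrib_left)
  also have "D * ln b \<le> b * j * ln b"
    using \<open>D \<le> b * j\<close> assms by (intro mult_right_mono) auto
  also have "D * ln j \<le> j + real (b - 1) * (ln (fact_b b j) + j)"
  proof -
    have "ln j \<le> j"
      using False ln_le_minus_one[of "real j"] by simp
    moreover have "real (b - 1) * (j * ln j) \<le> real (b - 1) * (ln (fact_b b j) + j)"
      using ln_fact_b_ge[OF assms, of j] by (intro mult_left_mono) auto
    ultimately show ?thesis
      unfolding D_def by (simp add: algebra_simps)
  qed
  finally show ?thesis
    using assms by (simp add: D_def of_nat_diff algebra_simps)
qed (simp add: fact_b_def)

section \<open>Estimates for the Lempel--Ziv martingale\<close>

lemma d_LZ_nonneg: "d_LZ b w \<ge> 0"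
  unfolding d_LZ_def by simp

lemma lz_D_full: "lz_full_parse b w \<Longrightarrow> lz_D b w = 1 + (b - 1) * length (lz_phrases b w)"
  unfolding lz_D_def lz_r_def by simp

lemma ln_d_LZ_full:
  assumes "b \<ge> 1" "lz_full_parse b w"
  shows "ln (d_LZ b w) = length w * ln b - ln (fact_b b (length (lz_phrases b w)))"
  using assms fact_b_pos[of b "length (lz_phrases b w)"]
  by (simp add: d_LZ_def lz_r_def ln_div ln_realpow)

lemma d_LZ_le:
  "d_LZ b w \<le> real b ^ length w * (1 + real b * (length (lz_phrases b w) + 1))
    / fact_b b (length (lz_phrases b w))"
proof (cases "lz_full_parse b w")
  case True
  have "real b ^ length w * 1 \<le> real b ^ length w * (1 + real b * (length (lz_phrases b w) + 1))"
    by (intro mult_left_mono) simp_all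
  then show ?thesis
    using True by (simp add: d_LZ_def lz_r_def divide_right_mono)
next
  case False
  let ?j = "length (lz_phrases b w)"
  have "lz_L b w \<le> card (lz_tree b w)"
    unfolding lz_L_def using card_lz_tree_le[of b w] by (intro card_mono) auto
  also have "\<dots> \<le> 1 + b * (?j + 1)"
    using card_lz_tree_le[of b w] by (simp add: algebra_simps)
  finally have L: "real (lz_L b w) \<le> 1 + real b * (?j + 1)"
    by (metis of_nat_1 of_nat_add of_nat_le_iff of_nat_mult of_nat_Suc add.commute)
  have "d_LZ b w = real b ^ length w * lz_L b w / fact_b b (Suc ?j)"
    using False by (simp add: d_LZ_def lz_r_def)
  also have "\<dots> \<le> real b ^ length w * (1 + real b * (?j + 1)) / fact_b b (Suc ?j)"
    using mult_left_mono[OF L, of "b ^ length w"] by (intro divide_right_mono) (simp_all add: algebra_simps)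
  also have "\<dots> \<le> real b ^ length w * (1 + real b * (?j + 1)) / fact_b b ?j"
  proof (rule divide_left_mono)
    show "real (fact_b b ?j) \<le> real (fact_b b (Suc ?j))"
      by (simp add: fact_b_Suc)
    show "0 < real (fact_b b (Suc ?j)) * real (fact_b b ?j)"
      using fact_b_pos by simp
  qed simp
  finally show ?thesis .
qed

lemma d_LZ_le_concat_lz_phrases:
  assumes "b \<ge> 1" "set w \<subseteq> {..<b}"
  shows "d_LZ b w
    \<le> (b + 1) ^ (2 * (length (lz_phrases b w) + 1)) * d_LZ b (concat (lz_phrases b w))"
proof -
  let ?j = "length (lz_phrases b w)" and ?u = "concat (lz_phrases b w)"
  have d_u: "d_LZ b ?u = b ^ length ?u / fact_b b ?j"
    using lz_parse_concat_phrases[of b w] by (simp add: d_LZ_def lz_r_def)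
  have "length w \<le> length ?u + (?j + 1)"
    using arg_cong[OF lz_parse_decomp[of w b], of length] length_lz_partial_le[OF assms] by simp
  then have "real b ^ length w \<le> real b ^ (length ?u + (?j + 1))"
    using assms(1) by (intro power_increasing) simp_all
  also have "\<dots> \<le> real b ^ length ?u * (real b + 1) ^ (?j + 1)"
    by (subst power_add) (intro mult_left_mono power_mono; simp)
  finally have power_le: "real b ^ length w \<le> real b ^ length ?u * (real b + 1) ^ (?j + 1)" .
  have Bernoulli: "1 + real b * (?j + 1) \<le> (real b + 1) ^ (?j + 1)"
    using Bernoulli_inequality[of "real b" "?j + 1"] by (simp add: algebra_simps)
  have "d_LZ b w \<le> real b ^ length w * (1 + real b * (?j + 1)) / fact_b b ?j"
    by (rule d_LZ_le)
  also have "\<dots> \<le> real b ^ length ?u * (real b + 1) ^ (?j + 1) * (real b + 1) ^ (?j + 1) / fact_b b ?j"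
    by (rule divide_right_mono[OF mult_mono[OF power_le Bernoulli]]) simp_all
  also have "\<dots> = (real b + 1) ^ (2 * (?j + 1)) * d_LZ b ?u"
    unfolding d_u mult_2 power_add by simp
  finally show ?thesis by simp
qed

lemma ln_d_LZ_concat_lz_phrases_gt:
  fixes \<epsilon> :: real
  assumes "b \<ge> 1" "set w \<subseteq> {..<b}" "\<epsilon> \<ge> 0" "\<epsilon> * length w < ln (d_LZ b w)"
  shows "\<epsilon> * length (concat (lz_phrases b w)) - 2 * ln (real b + 1) * (length (lz_phrases b w) + 1)
    < ln (d_LZ b (concat (lz_phrases b w)))"
proof -
  let ?j = "length (lz_phrases b w)" and ?u = "concat (lz_phrases b w)"
  have "0 \<le> \<epsilon> * length w"
    using assms(3) by simp
  then have "d_LZ b w > 0"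
    using assms(4) d_LZ_nonneg[of b w] by (cases "d_LZ b w = 0") auto
  moreover have bound: "d_LZ b w \<le> (real b + 1) ^ (2 * (?j + 1)) * d_LZ b ?u"
    using d_LZ_le_concat_lz_phrases[OF assms(1,2)] by simp
  ultimately have "0 < (real b + 1) ^ (2 * (?j + 1)) * d_LZ b ?u"
    by linarith
  then have "d_LZ b ?u > 0"
    using d_LZ_nonneg[of b ?u] by (auto simp: zero_less_mult_iff)
  have "ln (d_LZ b w) \<le> ln ((real b + 1) ^ (2 * (?j + 1)) * d_LZ b ?u)"
    using bound \<open>d_LZ b w > 0\<close> \<open>0 < (real b + 1) ^ (2 * (?j + 1)) * d_LZ b ?u\<close> by simp
  also have "\<dots> = ln ((real b + 1) ^ (2 * (?j + 1))) + ln (d_LZ b ?u)"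
    using \<open>d_LZ b ?u > 0\<close> by (intro ln_mult_pos) simp_all
  also have "\<dots> = 2 * ln (real b + 1) * (?j + 1) + ln (d_LZ b ?u)"
    by (simp only: ln_realpow) (simp add: algebra_simps)
  finally have "ln (d_LZ b w) \<le> 2 * ln (real b + 1) * (?j + 1) + ln (d_LZ b ?u)" .
  moreover have "\<epsilon> * length ?u \<le> \<epsilon> * length w"
    using arg_cong[OF lz_parse_decomp[of w b], of length] assms(3) by (intro mult_left_mono) auto
  ultimately show ?thesis
    using assms(4) by linarith
qed

section \<open>The three criteria\<close>

lemma ln_d_LZ_gt_if_lz_D_log_lt:
  assumes "b \<ge> 2" "lz_full_parse b w"
    and "lz_D b w * log b (lz_D b w) < \<alpha> * real (b - 1) * length w"
  shows "(1 - \<alpha>) * ln b * length w < ln (d_LZ b w)"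
proof -
  let ?j = "length (lz_phrases b w)"
  have "real (b - 1) * ln (fact_b b ?j) \<le> lz_D b w * ln (lz_D b w)"
    using mult_ln_fact_b_le[of b ?j] lz_D_full[OF assms(2)] by simp
  also have "\<dots> < \<alpha> * real (b - 1) * length w * ln b"
    using assms(1,3) by (simp add: log_def pos_divide_less_eq)
  finally have "ln (fact_b b ?j) < \<alpha> * length w * ln b"
    using assms(1) by (simp add: of_nat_diff mult.commute mult.left_commute)
  then show ?thesis
    using ln_d_LZ_full[OF _ assms(2)] assms(1) by (simp add: algebra_simps)
qed

lemma eventually_few_lz_phrases:
  fixes c \<eta> :: real
  assumes "b \<ge> 2" "c \<ge> 0" "\<eta> > 0"
  shows "\<forall>\<^sub>F m in sequentially. \<forall>w. length w = m \<longrightarrow> lz_full_parse b w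
    \<longrightarrow> - c * (length (lz_phrases b w) + 1) \<le> ln (d_LZ b w) \<longrightarrow> length (lz_phrases b w) \<le> \<eta> * m"
proof -
  have "\<forall>\<^sub>F m in sequentially. \<forall>x\<ge>1. x * ln x \<le> ln b * m + (2 * c + 1) * x \<longrightarrow> x \<le> \<eta> * m"
    using assms by (intro eventually_le_if_mult_ln_le) auto
  then show ?thesis
  proof (rule eventually_mono, intro allI impI)
  fix m w
  assume small: "\<forall>x\<ge>1. x * ln x \<le> ln b * m + (2 * c + 1) * x \<longrightarrow> x \<le> \<eta> * m"
    and w: "length w = m" "lz_full_parse b w" "- c * (length (lz_phrases b w) + 1) \<le> ln (d_LZ b w)"
  let ?j = "length (lz_phrases b w)"
  show "?j \<le> \<eta> * m"
  proof (cases "?j = 0")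
    case False
    have "?j * ln ?j \<le> ln (fact_b b ?j) + ?j"
      using ln_fact_b_ge[OF assms(1)] by (simp add: algebra_simps)
    also have "\<dots> \<le> ln b * m + c * (?j + 1) + ?j"
      using ln_d_LZ_full[of b w] w assms(1) by (simp add: algebra_simps)
    also have "\<dots> \<le> ln b * m + (2 * c + 1) * ?j"
      using False assms(2) mult_left_mono[of 1 "real ?j" c] by (simp add: algebra_simps Suc_le_eq)
    moreover have "real ?j \<ge> 1"
      using False by (metis One_nat_def less_one not_le of_nat_1 of_nat_le_iff)
    ultimately show ?thesis
      using small by simp
  qed (use assms(3) in simp)
  qed
qed

lemma eventually_lz_D_log_lt_if_ln_d_LZ_gt:
  fixes \<epsilon> :: real
  assumes "b \<ge> 2" "\<epsilon> > 0"
  shows "\<exists>\<alpha><1. \<forall>\<^sub>F m in sequentially. \<forall>w. length w = m \<longrightarrow> lz_full_parse b w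
    \<longrightarrow> \<epsilon> * m < ln (d_LZ b w) \<longrightarrow> lz_D b w * log b (lz_D b w) < \<alpha> * real (b - 1) * m"
proof (intro exI[of _ "1 - \<epsilon> / (2 * ln b)"] conjI)
  (* small enough that the O(j) error of mult_ln_le_ln_fact_b uses up only half of the margin \<epsilon> *)
  define \<eta> where "\<eta> = real (b - 1) * \<epsilon> / (2 * b * (ln b + 1))"
  have "real b * (ln b + 1) > 0"
    using assms by (simp add: add_pos_pos)
  then have "\<eta> > 0"
    using assms unfolding \<eta>_def by simp
  show "1 - \<epsilon> / (2 * ln b) < 1"
    using assms by simp
  show "\<forall>\<^sub>F m in sequentially. \<forall>w. length w = m \<longrightarrow> lz_full_parse b w \<longrightarrow> \<epsilon> * m < ln (d_LZ b w)
      \<longrightarrow> lz_D b w * log b (lz_D b w) < (1 - \<epsilon> / (2 * ln b)) * real (b - 1) * m"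
    using eventually_few_lz_phrases[OF assms(1) order_refl \<open>\<eta> > 0\<close>]
  proof (rule eventually_mono, intro allI impI)
    fix m w
    assume few: "\<forall>w. length w = m \<longrightarrow> lz_full_parse b w
        \<longrightarrow> - 0 * real (length (lz_phrases b w) + 1) \<le> ln (d_LZ b w) \<longrightarrow> length (lz_phrases b w) \<le> \<eta> * m"
      and w: "length w = m" "lz_full_parse b w" "\<epsilon> * m < ln (d_LZ b w)"
    let ?j = "length (lz_phrases b w)"
    have "0 \<le> \<epsilon> * m"
      using assms(2) by simp
    then have "0 \<le> ln (d_LZ b w)"
      using w(3) by linarith
    then have "?j \<le> \<eta> * m"
      using few w by simp
    have "ln (fact_b b ?j) < (ln b - \<epsilon>) * m"
      using ln_d_LZ_full[of b w] w assms(1) by (simp add: algebra_simps)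
    then have "real (b - 1) * ln (fact_b b ?j) < real (b - 1) * ((ln b - \<epsilon>) * m)"
      using assms(1) by (intro mult_strict_left_mono) auto
    moreover have "b * (ln b + 1) * ?j \<le> b * (ln b + 1) * (\<eta> * m)"
      using \<open>?j \<le> \<eta> * m\<close> assms(1) by (intro mult_left_mono) auto
    moreover have D: "real (lz_D b w) = 1 + real (b - 1) * ?j"
      using lz_D_full[OF w(2)] by simp
    ultimately have "lz_D b w * ln (lz_D b w) < real (b - 1) * ((ln b - \<epsilon>) * m) + b * (ln b + 1) * (\<eta> * m)"
      unfolding D using mult_ln_le_ln_fact_b[OF assms(1), of ?j] by linarith
    also have "b * (ln b + 1) * (\<eta> * m) = real (b - 1) * \<epsilon> * m / 2"
      using \<open>real b * (ln b + 1) > 0\<close> unfolding \<eta>_def by (simp add: field_simps)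
    also have "real (b - 1) * ((ln b - \<epsilon>) * m) + real (b - 1) * \<epsilon> * m / 2
        = (1 - \<epsilon> / (2 * ln b)) * real (b - 1) * m * ln b"
      using assms(1) by (simp add: field_simps)
    finally show "lz_D b w * log b (lz_D b w) < (1 - \<epsilon> / (2 * ln b)) * real (b - 1) * m"
      using assms(1) by (simp add: log_def pos_divide_less_eq)
  qed
qed

lemma filterlim_length_concat_lz_phrases_prefix_of:
  assumes "b \<ge> 1" "\<forall>i. S i < b"
  shows "filterlim (\<lambda>n. length (concat (lz_phrases b (prefix_of S n)))) at_top sequentially"
proof -
  have n_le: "n \<le> 2 * length (concat (lz_phrases b (prefix_of S n))) + 1" for n
  proof -
    have "n = length (concat (lz_phrases b (prefix_of S n))) + length (lz_partial b (prefix_of S n))"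
      using arg_cong[OF lz_parse_decomp[of "prefix_of S n" b], of length]
      unfolding length_append length_prefix_of .
    then show ?thesis
      using length_lz_partial_le[OF assms(1) set_prefix_of_subset[OF assms(2)], of n]
        length_lz_phrases_le[of b "prefix_of S n"]
      by linarith
  qed
  show ?thesis
    unfolding filterlim_at_top eventually_sequentially
  proof (intro allI)
    fix Z :: nat
    have "Z \<le> length (concat (lz_phrases b (prefix_of S n)))" if "2 * Z \<le> n" for n
      using that n_le[of n] by linarith
    then show "\<exists>N. \<forall>n\<ge>N. Z \<le> length (concat (lz_phrases b (prefix_of S n)))" by blast
  qed
qed

lemma eventually_ln_d_LZ_concat_lz_phrases_gt:
  fixes \<epsilon> :: real
  assumes "b \<ge> 2" "\<forall>i. S i < b" "\<epsilon> > 0"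
  shows "\<forall>\<^sub>F n in sequentially. \<epsilon> * n < ln (d_LZ b (prefix_of S n))
    \<longrightarrow> \<epsilon> / 2 * length (concat (lz_phrases b (prefix_of S n)))
      < ln (d_LZ b (concat (lz_phrases b (prefix_of S n))))"
proof -
  define c where "c = 2 * ln (real b + 1)"
  have "c > 0"
    using assms(1) unfolding c_def by simp
  define \<eta> where "\<eta> = \<epsilon> / (4 * c)"
  have "\<eta> > 0"
    using \<open>c > 0\<close> assms(3) unfolding \<eta>_def by simp
  note lim = filterlim_length_concat_lz_phrases_prefix_of[OF _ assms(2)]
  have "\<forall>\<^sub>F n in sequentially.
      (\<forall>w. length w = length (concat (lz_phrases b (prefix_of S n))) \<longrightarrow> lz_full_parse b w
        \<longrightarrow> - c * (length (lz_phrases b w) + 1) \<le> ln (d_LZ b w)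
        \<longrightarrow> length (lz_phrases b w) \<le> \<eta> * length (concat (lz_phrases b (prefix_of S n))))
      \<and> 1 \<le> length (concat (lz_phrases b (prefix_of S n)))"
    using assms(1)
    by (intro eventually_conj eventually_compose_filterlim[OF _ lim]
        eventually_few_lz_phrases[OF assms(1) less_imp_le[OF \<open>c > 0\<close>] \<open>\<eta> > 0\<close>]
        eventually_ge_at_top) simp_all
  then show ?thesis
  proof eventually_elim
    case (elim n)
    let ?w = "prefix_of S n"
    let ?u = "concat (lz_phrases b ?w)" and ?j = "length (lz_phrases b ?w)"
    have full: "lz_full_parse b ?u" "lz_phrases b ?u = lz_phrases b ?w"
      using lz_parse_concat_phrases by auto
    show ?case
    proof
      assume "\<epsilon> * n < ln (d_LZ b ?w)"
      then have gt: "\<epsilon> * length ?u - c * (real ?j + 1) < ln (d_LZ b ?u)"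
        using ln_d_LZ_concat_lz_phrases_gt[of b ?w \<epsilon>] set_prefix_of_subset[OF assms(2)] assms
        unfolding c_def by (simp add: add.commute)
      moreover have "0 \<le> \<epsilon> * length ?u"
        using assms(3) by simp
      ultimately have "- c * (real ?j + 1) \<le> ln (d_LZ b ?u)"
        by linarith
      then have "- c * real (length (lz_phrases b ?u) + 1) \<le> ln (d_LZ b ?u)"
        unfolding full(2) of_nat_add of_nat_1 .
      then have "length (lz_phrases b ?u) \<le> \<eta> * length ?u"
        by (rule elim[THEN conjunct1, rule_format, OF refl full(1)])
      then have "?j \<le> \<eta> * length ?u"
        unfolding full(2) .
      moreover have "?j \<ge> 1"
        using elim by (cases "lz_phrases b ?w") auto
      ultimately have "real ?j + 1 \<le> 2 * (\<eta> * length ?u)"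
        by linarith
      then have "c * (real ?j + 1) \<le> c * (2 * (\<eta> * length ?u))"
        using \<open>c > 0\<close> by (intro mult_left_mono) auto
      also have "\<dots> = \<epsilon> / 2 * length ?u"
        using \<open>c > 0\<close> unfolding \<eta>_def by simp
      finally show "\<epsilon> / 2 * length ?u < ln (d_LZ b ?u)"
        using gt by linarith
    qed
  qed
qed

lemma frequently_full_ln_d_LZ_gt:
  fixes \<epsilon> :: real
  assumes "b \<ge> 2" "\<forall>i. S i < b" "\<epsilon> > 0"
    and "\<exists>\<^sub>F n in sequentially. \<epsilon> * n < ln (d_LZ b (prefix_of S n))"
  shows "\<exists>\<^sub>F m in sequentially. lz_full_parse b (prefix_of S m) \<and> \<epsilon> / 2 * m < ln (d_LZ b (prefix_of S m))"
proof -
  let ?m = "\<lambda>n. length (concat (lz_phrases b (prefix_of S n)))"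
  have "\<exists>\<^sub>F n in sequentially. \<epsilon> / 2 * ?m n < ln (d_LZ b (concat (lz_phrases b (prefix_of S n))))"
    using eventually_ln_d_LZ_concat_lz_phrases_gt[OF assms(1-3)] assms(4) by (rule frequently_mp)
  then have "\<exists>\<^sub>F n in sequentially. lz_full_parse b (prefix_of S (?m n))
      \<and> \<epsilon> / 2 * ?m n < ln (d_LZ b (prefix_of S (?m n)))"
    by (rule frequently_elim1)
      (simp only: concat_lz_phrases_prefix_of[symmetric] lz_parse_concat_phrases simp_thms)
  then show ?thesis
    using filterlim_length_concat_lz_phrases_prefix_of[OF _ assms(2)] assms(1)
    by (intro frequently_filterlim[where P = "\<lambda>m. lz_full_parse b (prefix_of S m)
      \<and> \<epsilon> / 2 * m < ln (d_LZ b (prefix_of S m))"]) auto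
qed

lemma limsup_ln_d_LZ_gt_0_iff:
  assumes "b \<ge> 2" "\<forall>i. S i < b"
  shows "0 < limsup (\<lambda>n. ereal (ln (d_LZ b (prefix_of S n)) / real n))
    \<longleftrightarrow> (\<exists>\<epsilon>::real>0. \<exists>\<^sub>F n in sequentially. lz_full_parse b (prefix_of S n) \<and> \<epsilon> * n < ln (d_LZ b (prefix_of S n)))"
  unfolding limsup_gt_0_iff_frequently
proof
  assume "\<exists>\<epsilon>>0. \<exists>\<^sub>F n in sequentially. \<epsilon> < ln (d_LZ b (prefix_of S n)) / real n"
  then obtain \<epsilon> :: real where "\<epsilon> > 0"
    and freq: "\<exists>\<^sub>F n in sequentially. \<epsilon> < ln (d_LZ b (prefix_of S n)) / real n"
    by blast
  have scaled: "\<epsilon> * n < x" if "\<epsilon> < x / real n" for n :: nat and x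
    using that \<open>\<epsilon> > 0\<close> by (cases "n = 0") (simp_all add: pos_less_divide_eq)
  have "\<exists>\<^sub>F n in sequentially. \<epsilon> * n < ln (d_LZ b (prefix_of S n))"
    using freq by (rule frequently_elim1) (rule scaled)
  then have "\<exists>\<^sub>F n in sequentially. lz_full_parse b (prefix_of S n) \<and> \<epsilon> / 2 * n < ln (d_LZ b (prefix_of S n))"
    by (rule frequently_full_ln_d_LZ_gt[OF assms \<open>\<epsilon> > 0\<close>])
  moreover have "\<epsilon> / 2 > 0"
    using \<open>\<epsilon> > 0\<close> by simp
  ultimately show "\<exists>\<epsilon>::real>0. \<exists>\<^sub>F n in sequentially. lz_full_parse b (prefix_of S n) \<and> \<epsilon> * n < ln (d_LZ b (prefix_of S n))"
    by blast
next
  assume "\<exists>\<epsilon>::real>0. \<exists>\<^sub>F n in sequentially. lz_full_parse b (prefix_of S n) \<and> \<epsilon> * n < ln (d_LZ b (prefix_of S n))"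
  then obtain \<epsilon> :: real where "\<epsilon> > 0"
    and freq: "\<exists>\<^sub>F n in sequentially. lz_full_parse b (prefix_of S n) \<and> \<epsilon> * n < ln (d_LZ b (prefix_of S n))"
    by blast
  have unscaled: "\<epsilon> < x / real n" if "P \<and> \<epsilon> * n < x" "n > 0" for P n x
    using that by (simp add: pos_less_divide_eq)
  have "\<exists>\<^sub>F n in sequentially. \<epsilon> < ln (d_LZ b (prefix_of S n)) / real n"
    using frequently_eventually_frequently[OF freq eventually_gt_at_top[of 0]]
    by (rule frequently_elim1) (use unscaled in blast)
  with \<open>\<epsilon> > 0\<close> show "\<exists>\<epsilon>>0. \<exists>\<^sub>F n in sequentially. \<epsilon> < ln (d_LZ b (prefix_of S n)) / real n"
    by blast
qed

lemma frequently_ln_d_LZ_gt_iff_lz_D_log_lt: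
  assumes "b \<ge> 2"
  shows "(\<exists>\<epsilon>::real>0. \<exists>\<^sub>F n in sequentially. lz_full_parse b (prefix_of S n) \<and> \<epsilon> * n < ln (d_LZ b (prefix_of S n)))
    \<longleftrightarrow> (\<exists>\<alpha><1. \<exists>\<^sub>F n in sequentially. lz_full_parse b (prefix_of S n)
          \<and> lz_D b (prefix_of S n) * log b (lz_D b (prefix_of S n)) < \<alpha> * real (b - 1) * n)"
proof
  assume "\<exists>\<epsilon>::real>0. \<exists>\<^sub>F n in sequentially. lz_full_parse b (prefix_of S n) \<and> \<epsilon> * n < ln (d_LZ b (prefix_of S n))"
  then obtain \<epsilon> :: real where "\<epsilon> > 0"
    and freq: "\<exists>\<^sub>F n in sequentially. lz_full_parse b (prefix_of S n) \<and> \<epsilon> * n < ln (d_LZ b (prefix_of S n))"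
    by blast
  obtain \<alpha> where "\<alpha> < 1" and ev: "\<forall>\<^sub>F m in sequentially. \<forall>w. length w = m \<longrightarrow> lz_full_parse b w
      \<longrightarrow> \<epsilon> * m < ln (d_LZ b w) \<longrightarrow> lz_D b w * log b (lz_D b w) < \<alpha> * real (b - 1) * m"
    using eventually_lz_D_log_lt_if_ln_d_LZ_gt[OF assms \<open>\<epsilon> > 0\<close>] by blast
  have "\<forall>\<^sub>F n in sequentially. lz_full_parse b (prefix_of S n) \<and> \<epsilon> * n < ln (d_LZ b (prefix_of S n))
      \<longrightarrow> lz_full_parse b (prefix_of S n)
        \<and> lz_D b (prefix_of S n) * log b (lz_D b (prefix_of S n)) < \<alpha> * real (b - 1) * n"
    using ev by eventually_elim simp
  then have "\<exists>\<^sub>F n in sequentially. lz_full_parse b (prefix_of S n)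
      \<and> lz_D b (prefix_of S n) * log b (lz_D b (prefix_of S n)) < \<alpha> * real (b - 1) * n"
    using freq by (rule frequently_mp)
  with \<open>\<alpha> < 1\<close> show "\<exists>\<alpha><1. \<exists>\<^sub>F n in sequentially. lz_full_parse b (prefix_of S n)
      \<and> lz_D b (prefix_of S n) * log b (lz_D b (prefix_of S n)) < \<alpha> * real (b - 1) * n"
    by blast
next
  assume "\<exists>\<alpha><1. \<exists>\<^sub>F n in sequentially. lz_full_parse b (prefix_of S n)
      \<and> lz_D b (prefix_of S n) * log b (lz_D b (prefix_of S n)) < \<alpha> * real (b - 1) * n"
  then obtain \<alpha> :: real where "\<alpha> < 1" and freq: "\<exists>\<^sub>F n in sequentially. lz_full_parse b (prefix_of S n)
      \<and> lz_D b (prefix_of S n) * log b (lz_D b (prefix_of S n)) < \<alpha> * real (b - 1) * n"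
    by blast
  have gt: "(1 - \<alpha>) * ln b * n < ln (d_LZ b (prefix_of S n))"
    if "lz_full_parse b (prefix_of S n)"
      "lz_D b (prefix_of S n) * log b (lz_D b (prefix_of S n)) < \<alpha> * real (b - 1) * n" for n
    using ln_d_LZ_gt_if_lz_D_log_lt[of b "prefix_of S n" \<alpha>] that assms by simp
  have "\<exists>\<^sub>F n in sequentially. lz_full_parse b (prefix_of S n)
      \<and> (1 - \<alpha>) * ln b * n < ln (d_LZ b (prefix_of S n))"
    using freq by (rule frequently_elim1) (use gt in blast)
  moreover have "(1 - \<alpha>) * ln b > 0"
    using \<open>\<alpha> < 1\<close> assms by simp
  ultimately show "\<exists>\<epsilon>::real>0. \<exists>\<^sub>F n in sequentially. lz_full_parse b (prefix_of S n) \<and> \<epsilon> * n < ln (d_LZ b (prefix_of S n))"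
    by (intro exI[of _ "(1 - \<alpha>) * ln b"] conjI)
qed

theorem corollary2p3:
  fixes b :: nat and S :: "nat \<Rightarrow> nat"
  assumes "b \<ge> 2" and "\<forall>i. S i < b"
  shows "(limsup (\<lambda>n. ereal (ln (d_LZ b (prefix_of S n)) / real n)) > 0
          \<longleftrightarrow> (\<exists>\<alpha>::real. \<alpha> < 1 \<and> infinite {n. lz_full_parse b (prefix_of S n) \<and>
                 real (lz_D b (prefix_of S n)) * log b (real n) < \<alpha> * real (b - 1) * real n}))
       \<and> (limsup (\<lambda>n. ereal (ln (d_LZ b (prefix_of S n)) / real n)) > 0
          \<longleftrightarrow> (\<exists>\<alpha>::real. \<alpha> < 1 \<and> infinite {n. lz_full_parse b (prefix_of S n) \<and>
                 real (lz_D b (prefix_of S n)) * log b (real (lz_D b (prefix_of S n))) < \<alpha> * real (b - 1) * real n}))"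
proof -
  have "real (lz_D b (prefix_of S n)) \<ge> 1" for n
    by (simp add: lz_D_def)
  then have "(\<exists>\<alpha><1. \<exists>\<^sub>F n in sequentially. lz_full_parse b (prefix_of S n)
        \<and> lz_D b (prefix_of S n) * log b n < \<alpha> * real (b - 1) * n)
      \<longleftrightarrow> (\<exists>\<alpha><1. \<exists>\<^sub>F n in sequentially. lz_full_parse b (prefix_of S n)
        \<and> lz_D b (prefix_of S n) * log b (lz_D b (prefix_of S n)) < \<alpha> * real (b - 1) * n)"
    using assms(1) by (intro frequently_mult_log_lt_iff_mult_log_self_lt) auto
  then show ?thesis
    unfolding infinite_Collect_iff_frequently limsup_ln_d_LZ_gt_0_iff[OF assms]
      frequently_ln_d_LZ_gt_iff_lz_D_log_lt[OF assms(1)]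
    by blast
qed

end
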